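(* Let $L > 0$ and let $\alpha, \beta : \mathbb{R} \to \mathbb{R}^2$ be smooth $L$-periodic maps such that $\alpha'(s) \neq 0$ for all $s$, and \[ \langle \beta, \alpha' \rangle = 0, \qquad |\alpha'|^2 + |\beta|^2 = 1 \quad \text{on } \mathbb{R}. \] Set $a = \alpha' + \beta$ and $b = \alpha' - \beta$. Then there exist $s, r \in \mathbb{R}$ such that $a(s) + b(r) = 0$.
   Context: $\langle\cdot,\cdot\rangle$ and $|\cdot|$ are the Euclidean inner product and norm on $\mathbb{R}^2$. Note that $|a| = |b| = 1$. *)

theory Defs
  imports "HOL-Analysis.Analysis"
begin

definition vderiv :: "(real \<Rightarrow> 'a::real_normed_vector) \<Rightarrow> real \<Rightarrow> 'a" where
  "vderiv f = (\<lambda>t. vector_derivative f (at t))"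

definition smooth_curve :: "(real \<Rightarrow> 'a::real_normed_vector) \<Rightarrow> bool" where
  "smooth_curve f \<longleftrightarrow> (\<forall>n t. (vderiv ^^ n) f differentiable (at t))"

end

theory Submission
  imports Defs
begin

text \<open>Identify \<open>\<real>\<^sup>2\<close> with \<open>\<complex>\<close>. Orthogonality and \<open>|\<alpha>'|\<^sup>2 + |\<beta>|\<^sup>2 = 1\<close> make \<open>\<alpha>' + \<beta>\<close> and
  \<open>\<beta> - \<alpha>'\<close> unit vectors, so their images are compact connected subsets of the unit circle.
  For every direction \<open>w\<close> the closed curve \<open>\<alpha>\<close> has a tangent \<open>\<alpha>'(s) \<bottom> w\<close> (a critical point
  of \<open>\<langle>\<alpha>, w\<rangle>\<close>); then \<open>\<beta>(s)\<close> is parallel to \<open>w\<close>, and the reflection in the line \<open>\<real>w\<close> maps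
  \<open>\<alpha>'(s) + \<beta>(s)\<close> to \<open>\<beta>(s) - \<alpha>'(s)\<close>. If the two arcs were disjoint, they would miss a common
  point of the circle; measuring angles from that point, one arc lies entirely below the other,
  and the reflection in a suitable line maps the open arc below the upper one into itself,
  contradicting the previous property.\<close>

lemma unit_reflection_involutive:
  fixes w z :: complex
  assumes "norm w = 1"
  shows "w\<^sup>2 * cnj (w\<^sup>2 * cnj z) = z"
proof -
  have "w * cnj w = 1"
    using assms complex_norm_square[of w] by simp
  then show ?thesis
    by (simp add: power2_eq_square) (metis mult.assoc mult.commute mult.left_neutral)
qed

lemma cis_Arg_unit: "norm z = 1 \<Longrightarrow> cis (Arg z) = z"
  using cis_Arg[of z] by (force simp: sgn_div_norm)

lemma reflection_preserves_lower_arc: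
  fixes \<tau> :: real
  assumes "\<tau> \<le> pi"
  obtains w :: complex where "norm w = 1"
    and "\<And>z. norm z = 1 \<Longrightarrow> Arg z < \<tau> \<Longrightarrow> Arg (w\<^sup>2 * cnj z) < \<tau>"
proof
  let ?w = "cis ((\<tau> + pi) / 2)"
  show "norm ?w = 1" by simp
  fix z :: complex
  assume z: "norm z = 1" "Arg z < \<tau>"
  define \<theta> where "\<theta> = Arg z"
  have "z = cis \<theta>"
    using cis_Arg_unit z(1) by (simp add: \<theta>_def)
  then have "?w\<^sup>2 * cnj z = cis (\<tau> + pi - \<theta>)"
    by (simp add: power2_eq_square cis_cnj cis_mult)
  also have "\<dots> = cis (\<tau> - pi - \<theta>)"
    by (simp add: complex_eq_iff cos_diff sin_diff cos_add sin_add)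
  finally have "?w\<^sup>2 * cnj z = cis (\<tau> - pi - \<theta>)" .
  moreover have "- pi < \<theta>"
    by (simp add: \<theta>_def mpi_less_Arg)
  ultimately show "Arg (?w\<^sup>2 * cnj z) < \<tau>"
    using z assms by (simp add: Arg_cis \<theta>_def)
qed

lemma compact_connected_disjoint_ordered:
  fixes S T :: "real set"
  assumes "compact S" "connected S" "compact T" "connected T" "S \<inter> T = {}"
  shows "(\<forall>x\<in>S. \<forall>y\<in>T. x < y) \<or> (\<forall>x\<in>S. \<forall>y\<in>T. y < x)"
proof -
  obtain a b c d where S: "S = {a..b}" and T: "T = {c..d}"
    using assms connected_compact_interval_1 by metis
  show ?thesis
  proof (rule ccontr)
    assume "\<not> ?thesis"
    then have "max a c \<in> S \<inter> T"
      unfolding S T by auto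
    with assms(5) show False by blast
  qed
qed

text \<open>\<open>z \<mapsto> w\<^sup>2 * cnj z\<close> is the reflection in the line \<open>\<real>w\<close> for \<open>|w| = 1\<close>.\<close>

definition reflection_related :: "complex set \<Rightarrow> complex set \<Rightarrow> bool" where
  "reflection_related K1 K2 \<longleftrightarrow> (\<forall>w. norm w = 1 \<longrightarrow> (\<exists>z\<in>K1. w\<^sup>2 * cnj z \<in> K2))"

lemma reflection_related_sym:
  "reflection_related K1 K2 \<Longrightarrow> reflection_related K2 K1"
  unfolding reflection_related_def by (metis unit_reflection_involutive)

lemma reflection_related_rotate:
  fixes u :: complex
  assumes u: "norm u = 1" and rel: "reflection_related K1 K2"
  shows "reflection_related ((*) u ` K1) ((*) u ` K2)"
  unfolding reflection_related_def
proof (intro allI impI)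
  fix w :: complex
  assume w: "norm w = 1"
  have "u * cnj u = 1"
    using u complex_norm_square[of u] by simp
  obtain z where z: "z \<in> K1" "(w * cnj u)\<^sup>2 * cnj z \<in> K2"
    using rel w u unfolding reflection_related_def by (metis complex_mod_cnj mult_1_left norm_mult)
  have "w\<^sup>2 * cnj (u * z) = u * ((w * cnj u)\<^sup>2 * cnj z)"
    using \<open>u * cnj u = 1\<close> by (simp add: power2_eq_square algebra_simps)
  then show "\<exists>y\<in>(*) u ` K1. w\<^sup>2 * cnj y \<in> (*) u ` K2"
    using z by blast
qed

lemma unit_not_nonpos_Real:
  fixes z :: complex
  assumes "norm z = 1" "z \<noteq> -1"
  shows "z \<notin> \<real>\<^sub>\<le>\<^sub>0"
proof
  assume "z \<in> \<real>\<^sub>\<le>\<^sub>0"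
  then have "Re z \<le> 0" "Im z = 0"
    by (auto simp: complex_nonpos_Reals_iff)
  moreover have "\<bar>Re z\<bar> = 1"
    using assms(1) \<open>Im z = 0\<close> cmod_eq_Re by metis
  ultimately have "z = -1"
    by (simp add: complex_eq_iff)
  with assms(2) show False ..
qed

lemma continuous_on_Arg_unit:
  "K \<subseteq> sphere 0 1 - {-1} \<Longrightarrow> continuous_on K Arg"
  using unit_not_nonpos_Real
  by (intro continuous_on_subset[OF continuous_on_Arg]) fastforce

lemma arc_below_reflected_off:
  fixes K K' :: "complex set"
  assumes "K \<subseteq> sphere 0 1" "compact K'" "K' \<subseteq> sphere 0 1 - {-1}" "K' \<noteq> {}"
    and below: "\<forall>x\<in>K. \<forall>y\<in>K'. Arg x < Arg y"
  shows "\<not> reflection_related K K'"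
proof
  assume rel: "reflection_related K K'"
  have "continuous_on K' Arg"
    using assms(3) by (rule continuous_on_Arg_unit)
  then obtain y0 where y0: "y0 \<in> K'" "\<And>y. y \<in> K' \<Longrightarrow> Arg y0 \<le> Arg y"
    using continuous_attains_inf[OF assms(2,4)] by blast
  obtain w :: complex where w: "norm w = 1"
    and arc: "\<And>z. norm z = 1 \<Longrightarrow> Arg z < Arg y0 \<Longrightarrow> Arg (w\<^sup>2 * cnj z) < Arg y0"
    using reflection_preserves_lower_arc[OF Arg_le_pi] by blast
  obtain z where "z \<in> K" "w\<^sup>2 * cnj z \<in> K'"
    using rel w unfolding reflection_related_def by blast
  with arc[of z] assms(1) below y0 show False
    by fastforce
qed

lemma reflection_related_arcs_meet_off_minus_one:
  fixes K1 K2 :: "complex set"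
  assumes K1: "compact K1" "connected K1" "K1 \<subseteq> sphere 0 1 - {-1}" "K1 \<noteq> {}"
    and K2: "compact K2" "connected K2" "K2 \<subseteq> sphere 0 1 - {-1}" "K2 \<noteq> {}"
    and rel: "reflection_related K1 K2"
  shows "K1 \<inter> K2 \<noteq> {}"
proof
  assume disj: "K1 \<inter> K2 = {}"
  have "Arg ` K1 \<inter> Arg ` K2 = {}"
  proof (rule ccontr)
    assume "Arg ` K1 \<inter> Arg ` K2 \<noteq> {}"
    then obtain x y where "x \<in> K1" "y \<in> K2" "Arg x = Arg y"
      by blast
    then have "x = y"
      using K1(3) K2(3) cis_Arg_unit by (metis DiffD1 mem_sphere_0 subsetD)
    with \<open>x \<in> K1\<close> \<open>y \<in> K2\<close> disj show False
      by blast
  qed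
  moreover have "compact (Arg ` K1)" "connected (Arg ` K1)" "compact (Arg ` K2)" "connected (Arg ` K2)"
    using K1 K2 continuous_on_Arg_unit
    by (auto intro: compact_continuous_image connected_continuous_image)
  ultimately consider "\<forall>x\<in>K1. \<forall>y\<in>K2. Arg x < Arg y" | "\<forall>y\<in>K2. \<forall>x\<in>K1. Arg y < Arg x"
    using compact_connected_disjoint_ordered by (metis image_eqI)
  then show False
  proof cases
    case 1
    with K1(3) K2 rel arc_below_reflected_off[of K1 K2] show False
      by blast
  next
    case 2
    with K2(3) K1 reflection_related_sym[OF rel] arc_below_reflected_off[of K2 K1] show False
      by blast
  qed
qed

lemma reflection_related_arcs_meet:
  fixes K1 K2 :: "complex set"
  assumes K1: "compact K1" "connected K1" "K1 \<subseteq> sphere 0 1" "K1 \<noteq> {}"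
    and K2: "compact K2" "connected K2" "K2 \<subseteq> sphere 0 1" "K2 \<noteq> {}"
    and rel: "reflection_related K1 K2"
  shows "K1 \<inter> K2 \<noteq> {}"
proof
  assume disj: "K1 \<inter> K2 = {}"
  have "\<not> sphere 0 1 \<subseteq> K1 \<union> K2"
  proof
    assume "sphere 0 1 \<subseteq> K1 \<union> K2"
    moreover have "connected (sphere (0::complex) 1)"
      by (simp add: connected_sphere)
    ultimately show False
      using K1 K2 disj unfolding connected_closed
      by (metis compact_imp_closed inf.absorb_iff2 inf_bot_right inf_commute)
  qed
  then obtain p where p: "norm p = 1" "p \<notin> K1" "p \<notin> K2"
    by (auto simp: subset_iff)
  \<comment> \<open>Rotate the gap \<open>p\<close> to \<open>-1\<close>, off which \<open>Arg\<close> is a continuous angle coordinate.\<close>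
  define u where "u = - cnj p"
  have u: "norm u = 1"
    using p by (simp add: u_def)
  have "u * p = -1"
    using p complex_norm_square[of p] by (simp add: u_def mult.commute)
  have inj: "inj ((*) u)"
    using u by (intro injI) auto
  have "u * z \<noteq> -1" if "z \<noteq> p" for z
    using that \<open>u * p = -1\<close> u by (metis mult_left_cancel norm_zero zero_neq_one)
  then have sub: "(*) u ` K \<subseteq> sphere 0 1 - {-1}" if "K \<subseteq> sphere 0 1" "p \<notin> K" for K
    using that u by (auto simp: norm_mult) metis
  have "(*) u ` K1 \<inter> (*) u ` K2 \<noteq> {}"
    using K1 K2 p sub reflection_related_rotate[OF u rel]
    by (intro reflection_related_arcs_meet_off_minus_one)
       (auto intro!: compact_continuous_image connected_continuous_image continuous_intros)
  with inj disj show False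
    by (simp add: image_Int[symmetric])
qed

lemma reflection_of_orthogonal_frame:
  fixes d e w :: complex
  assumes dw: "d \<bullet> w = 0" and ed: "e \<bullet> d = 0" and "d \<noteq> 0" and w: "norm w = 1"
  shows "e - d = w\<^sup>2 * cnj (e + d)"
proof -
  obtain x y where d: "d = Complex x y" by (cases d)
  obtain u v where e: "e = Complex u v" by (cases e)
  obtain p q where w': "w = Complex p q" by (cases w)
  have h1: "x * p + y * q = 0" using dw by (simp add: d w' inner_complex_def)
  have h2: "u * x + v * y = 0" using ed by (simp add: d e inner_complex_def)
  have h3: "x \<noteq> 0 \<or> y \<noteq> 0" using \<open>d \<noteq> 0\<close> by (auto simp: d complex_eq_iff)
  have h4: "p\<^sup>2 + q\<^sup>2 = 1" using w by (simp add: w' cmod_def)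
  have "(v * p - u * q) * x = 0" "(v * p - u * q) * y = 0"
    using h1 h2 by algebra+
  then have k: "v * p - u * q = 0" \<comment> \<open>\<open>e\<close> is parallel to \<open>w\<close>\<close>
    using h3 by auto
  show ?thesis
    unfolding d e w' using h1 k h4
    by (simp add: complex_eq_iff power2_eq_square) algebra
qed

lemma periodic_shift_nat:
  assumes "\<And>s. f (s + L) = f s"
  shows "f (s + real n * L) = f s"
proof (induction n)
  case (Suc n)
  have "s + real (Suc n) * L = (s + real n * L) + L"
    by (simp add: algebra_simps)
  then show ?case
    using assms Suc.IH by (simp only:)
qed simp

lemma periodic_range_eq_image_Icc:
  fixes f :: "real \<Rightarrow> 'a"
  assumes L: "L > 0" and per: "\<And>s. f (s + L) = f s"
  shows "range f = f ` {0..L}"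
proof -
  have "f s \<in> f ` {0..L}" for s
  proof -
    define k where "k = \<lfloor>s / L\<rfloor>"
    define t where "t = s - of_int k * L"
    have "of_int k \<le> s / L" "s / L < of_int k + 1"
      unfolding k_def by linarith+
    then have "t \<in> {0..L}"
      using L by (simp add: t_def field_simps)
    moreover have "f s = f t"
    proof (cases "k \<ge> 0")
      case True
      then show ?thesis
        using periodic_shift_nat[of f L, OF per, of t "nat k"] by (simp add: t_def)
    next
      case False
      then show ?thesis
        using periodic_shift_nat[of f L, OF per, of s "nat (- k)"] by (simp add: t_def)
    qed
    ultimately show ?thesis by blast
  qed
  then show ?thesis by blast
qed

lemma periodic_has_critical_point:
  fixes g g' :: "real \<Rightarrow> real"
  assumes L: "L > 0" and per: "\<And>s. g (s + L) = g s"
    and deriv: "\<And>s. (g has_real_derivative g' s) (at s)"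
  obtains s where "g' s = 0"
proof -
  have "continuous_on {0..L} g"
    using deriv by (intro continuous_at_imp_continuous_on) (auto intro: DERIV_isCont)
  then obtain s where "s \<in> {0..L}" and max: "\<And>t. t \<in> {0..L} \<Longrightarrow> g t \<le> g s"
    using continuous_attains_sup[of "{0..L}" g] L by auto
  have "g t \<le> g s" for t
    using max periodic_range_eq_image_Icc[of L g] L per by (metis imageE rangeI)
  then have "g' s = 0"
    using DERIV_local_max[OF deriv zero_less_one] by blast
  then show thesis ..
qed

lemma has_vector_derivative_periodic:
  fixes f :: "real \<Rightarrow> 'a::real_normed_vector"
  assumes per: "\<And>s. f (s + L) = f s"
  shows "(f has_vector_derivative D) (at (s + L)) \<longleftrightarrow> (f has_vector_derivative D) (at s)"
proof -
  have shift: "(f has_vector_derivative D) (at t)"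
    if "(f has_vector_derivative D) (at (t + c))" "\<And>s. f (s + c) = f s" for t c
  proof -
    have "((f \<circ> (\<lambda>s. s + c)) has_vector_derivative (1 *\<^sub>R D)) (at t)"
      by (rule vector_diff_chain_at) (auto intro!: derivative_eq_intros that(1))
    moreover have "f \<circ> (\<lambda>s. s + c) = f"
      using that(2) by auto
    ultimately show ?thesis by simp
  qed
  have "f (s + - L) = f s" for s
    using per[of "s - L"] by simp
  then show ?thesis
    using shift[of s L] shift[of "s + L" "- L"] per by auto
qed

lemma compact_range_periodic:
  fixes f :: "real \<Rightarrow> 'a::topological_space"
  assumes "L > 0" "\<And>s. f (s + L) = f s" "continuous_on UNIV f"
  shows "compact (range f)"
  unfolding periodic_range_eq_image_Icc[of L f, OF assms(1,2)]
  using assms(3) by (intro compact_continuous_image) (auto intro: continuous_on_subset)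

lemma closed_curve_frame_sum_meets_difference:
  fixes \<gamma> d e :: "real \<Rightarrow> complex"
  assumes L: "L > 0"
    and \<gamma>: "\<And>s. (\<gamma> has_vector_derivative d s) (at s)" "\<And>s. \<gamma> (s + L) = \<gamma> s"
    and cont: "continuous_on UNIV d" "continuous_on UNIV e"
    and e_per: "\<And>s. e (s + L) = e s"
    and nz: "\<And>s. d s \<noteq> 0" and orth: "\<And>s. e s \<bullet> d s = 0"
    and unit: "\<And>s. (norm (d s))\<^sup>2 + (norm (e s))\<^sup>2 = 1"
  obtains s r where "d s + e s = e r - d r"
proof -
  define A where "A s = d s + e s" for s
  define C where "C s = e s - d s" for s
  have d_per: "d (s + L) = d s" for s
  proof (rule vector_derivative_unique_at)
    show "(\<gamma> has_vector_derivative d (s + L)) (at s)"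
      using \<gamma>(1)[of "s + L"] has_vector_derivative_periodic[of \<gamma> L] \<gamma>(2) by blast
  qed (rule \<gamma>(1))
  have "norm (A s) = 1" "norm (C s) = 1" for s
  proof -
    have "orthogonal (d s) (e s)" "orthogonal (e s) (- d s)"
      using orth[of s] by (simp_all add: orthogonal_def inner_commute)
    then have "(norm (A s))\<^sup>2 = 1" "(norm (C s))\<^sup>2 = 1"
      using unit[of s] norm_add_Pythagorean by (force simp: A_def C_def add.commute)+
    then show "norm (A s) = 1" "norm (C s) = 1"
      using norm_ge_zero by (smt (verit) power2_eq_1_iff)+
  qed
  then have sphere: "range A \<subseteq> sphere 0 1" "range C \<subseteq> sphere 0 1"
    by auto
  have "continuous_on UNIV A" "continuous_on UNIV C"
    unfolding A_def C_def using cont by (auto intro: continuous_intros)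
  then have arcs: "compact (range A)" "connected (range A)" "compact (range C)" "connected (range C)"
    using L d_per e_per
    by (auto intro!: compact_range_periodic connected_continuous_image simp: A_def C_def)
  have "reflection_related (range A) (range C)"
    unfolding reflection_related_def
  proof (intro allI impI)
    fix w :: complex
    assume w: "norm w = 1"
    have "((\<lambda>s. \<gamma> s \<bullet> w) has_real_derivative d s \<bullet> w) (at s)" for s
      using bounded_linear.has_vector_derivative[OF bounded_linear_inner_left \<gamma>(1)]
      by (simp add: has_real_derivative_iff_has_vector_derivative)
    then obtain s where "d s \<bullet> w = 0"
      using periodic_has_critical_point[OF L, of "\<lambda>s. \<gamma> s \<bullet> w" "\<lambda>s. d s \<bullet> w"] \<gamma>(2) by auto
    then have "C s = w\<^sup>2 * cnj (A s)"
      unfolding A_def C_def using reflection_of_orthogonal_frame[OF _ orth nz w] by (simp add: add.commute)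
    then show "\<exists>z\<in>range A. w\<^sup>2 * cnj z \<in> range C"
      by (metis rangeI)
  qed
  then have "range A \<inter> range C \<noteq> {}"
    using reflection_related_arcs_meet arcs sphere by blast
  then show thesis
    using that unfolding A_def C_def by auto
qed

definition complex_of_vec :: "real^2 \<Rightarrow> complex" where
  "complex_of_vec v = Complex (v$1) (v$2)"

lemma bounded_linear_complex_of_vec: "bounded_linear complex_of_vec"
proof -
  have "linear complex_of_vec"
    by (intro linearI) (simp_all add: complex_of_vec_def complex_eq_iff)
  then show ?thesis
    by (simp add: linear_conv_bounded_linear)
qed

lemma inner_complex_of_vec: "complex_of_vec u \<bullet> complex_of_vec v = u \<bullet> v"
  by (simp add: complex_of_vec_def inner_complex_def inner_vec_def sum_2)

lemma norm_complex_of_vec: "norm (complex_of_vec v) = norm v"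
  by (simp add: norm_eq_sqrt_inner inner_complex_of_vec)

lemma complex_of_vec_eq_0_iff: "complex_of_vec v = 0 \<longleftrightarrow> v = 0"
  by (metis norm_complex_of_vec norm_eq_zero)

lemma complex_of_vec_eq_iff: "complex_of_vec u = complex_of_vec v \<longleftrightarrow> u = v"
  by (auto simp: complex_of_vec_def vec_eq_iff forall_2)

lemma smooth_curve_vderiv: "smooth_curve f \<Longrightarrow> smooth_curve (vderiv f)"
  unfolding smooth_curve_def by (metis funpow_Suc_right o_apply)

lemma smooth_curve_has_vderiv:
  "smooth_curve f \<Longrightarrow> (f has_vector_derivative vderiv f t) (at t)"
  unfolding smooth_curve_def vderiv_def
  by (metis funpow_0 vector_derivative_works)

lemma smooth_curve_continuous: "smooth_curve f \<Longrightarrow> continuous_on UNIV f"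
  unfolding smooth_curve_def
  by (metis differentiable_imp_continuous_within continuous_at_imp_continuous_on funpow_0)

theorem lemma2p2:
  fixes L :: real and \<alpha> \<beta> :: "real \<Rightarrow> real^2"
  assumes "L > 0"
    and "smooth_curve \<alpha>" and "smooth_curve \<beta>"
    and "\<forall>s. \<alpha> (s + L) = \<alpha> s" and "\<forall>s. \<beta> (s + L) = \<beta> s"
    and "\<forall>s. vderiv \<alpha> s \<noteq> 0"
    and "\<forall>s. \<beta> s \<bullet> vderiv \<alpha> s = 0"
    and "\<forall>s. (norm (vderiv \<alpha> s))\<^sup>2 + (norm (\<beta> s))\<^sup>2 = 1"
  shows "let a = (\<lambda>s. vderiv \<alpha> s + \<beta> s); b = (\<lambda>s. vderiv \<alpha> s - \<beta> s)
         in \<exists>s r. a s + b r = 0"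
proof -
  let ?c = complex_of_vec
  note c_linear = bounded_linear_complex_of_vec
  obtain s r where "?c (vderiv \<alpha> s) + ?c (\<beta> s) = ?c (\<beta> r) - ?c (vderiv \<alpha> r)"
  proof (rule closed_curve_frame_sum_meets_difference[of L "?c \<circ> \<alpha>" "?c \<circ> vderiv \<alpha>" "?c \<circ> \<beta>"])
    show "(?c \<circ> \<alpha> has_vector_derivative (?c \<circ> vderiv \<alpha>) s) (at s)" for s
      using bounded_linear.has_vector_derivative[OF c_linear smooth_curve_has_vderiv[OF assms(2)]]
      by (simp add: o_def)
    show "continuous_on UNIV (?c \<circ> vderiv \<alpha>)" "continuous_on UNIV (?c \<circ> \<beta>)"
      using assms(2,3) smooth_curve_vderiv smooth_curve_continuous
      by (auto intro!: bounded_linear.continuous_on[OF c_linear] simp: o_def)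
  qed (use assms c_linear in \<open>simp_all add: complex_of_vec_eq_0_iff norm_complex_of_vec inner_complex_of_vec
         flip: linear_simps(1,2)\<close>)
  then have "?c (vderiv \<alpha> s + \<beta> s) = ?c (\<beta> r - vderiv \<alpha> r)"
    using c_linear by (simp add: linear_simps)
  then have "vderiv \<alpha> s + \<beta> s + (vderiv \<alpha> r - \<beta> r) = 0"
    by (simp add: complex_of_vec_eq_iff algebra_simps)
  then show ?thesis
    unfolding Let_def by blast
qed

end
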